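(* Let $G$ be an abelian, second countable, locally compact group with Haar measure $\mu$. Let $\mathfrak{H}$ be a Hilbert space and $f:G\to\mathfrak{H}$ bounded with $g\mapsto\langle f(g),x\rangle$ Borel measurable for every $x\in\mathfrak{H}$, and assume $F:G\times G\to\mathbb{C}$, $F(g,h)=\langle f(g),f(h)\rangle$, is Borel measurable. Let $\Lambda_1,\Lambda_2\subset G$ be Borel sets with $\mu(\Lambda_j)<\infty$. Then \[ \left\|\int_{\Lambda_2}\int_{\Lambda_1}f(gh)\,dh\,dg\right\|^2\le\mu(\Lambda_2)\int_{\Lambda_1}\int_{\Lambda_1}\int_{\Lambda_2}\langle f(gh_1),f(gh_2)\rangle\,dg\,dh_1\,dh_2, \] and in particular these integrals exist.
   Context: Inner products are conjugate linear in the first slot. For measurable $\Lambda$ with $\mu(\Lambda)<\infty$, $\int_\Lambda f\,d\mu\in\mathfrak{H}$ is defined weakly by $\langle\int_\Lambda f\,d\mu,x\rangle=\int_\Lambda\langle f(y),x\rangle\,d\mu(y)$ for all $x\in\mathfrak{H}$; iterated integrals $\int_C\int_B\int_A\cdots$ are evaluated from the innermost outward. *)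

theory Defs
  imports "HOL-Analysis.Analysis" "HOL-Library.Complex_Order"
begin

class complex_vector = real_vector +
  fixes scaleC :: "complex \<Rightarrow> 'a \<Rightarrow> 'a" (infixr \<open>*\<^sub>C\<close> 75)
  assumes scaleC_add_right: "a *\<^sub>C (x + y) = a *\<^sub>C x + a *\<^sub>C y"
    and scaleC_add_left: "(a + b) *\<^sub>C x = a *\<^sub>C x + b *\<^sub>C x"
    and scaleC_scaleC: "a *\<^sub>C (b *\<^sub>C x) = (a * b) *\<^sub>C x"
    and scaleC_one: "1 *\<^sub>C x = x"
    and scaleR_scaleC: "scaleR r x = complex_of_real r *\<^sub>C x"

class complex_inner = complex_vector + real_normed_vector +
  fixes cinner :: "'a \<Rightarrow> 'a \<Rightarrow> complex"
  assumes cinner_commute: "cinner x y = cnj (cinner y x)"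
    and cinner_add_left: "cinner (x + y) z = cinner x z + cinner y z"
    and cinner_scaleC_left: "cinner (r *\<^sub>C x) y = cnj r * cinner x y"
    and cinner_ge_zero: "0 \<le> cinner x x"
    and cinner_eq_zero_iff: "cinner x x = 0 \<longleftrightarrow> x = 0"
    and norm_eq_sqrt_cinner: "norm x = sqrt (Re (cinner x x))"

text \<open>A complex Hilbert space is a complete complex inner product space:
  type class constraint \<open>{complex_inner, complete_space}\<close>.\<close>

definition locally_compact_type :: "'a::topological_space itself \<Rightarrow> bool" where
  "locally_compact_type _ \<longleftrightarrow>
     (\<forall>x::'a. \<exists>U K. open U \<and> compact K \<and> x \<in> U \<and> U \<subseteq> K)"

text \<open>Haar measure on an abelian (additively written) locally compact Hausdorff group:
  a nonzero translation invariant Radon measure on the Borel sets.\<close>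
definition haar_measure :: "'g::topological_ab_group_add measure \<Rightarrow> bool" where
  "haar_measure M \<longleftrightarrow>
     sets M = sets borel \<and>
     (\<forall>g A. A \<in> sets borel \<longrightarrow> emeasure M ((\<lambda>x. g + x) ` A) = emeasure M A) \<and>
     (\<forall>K. compact K \<longrightarrow> emeasure M K < \<infinity>) \<and>
     (\<forall>U. open U \<and> U \<noteq> {} \<longrightarrow> emeasure M U > 0) \<and>
     (\<forall>A \<in> sets borel. emeasure M A = (INF U \<in> {U. open U \<and> A \<subseteq> U}. emeasure M U)) \<and>
     (\<forall>U. open U \<longrightarrow> emeasure M U = (SUP K \<in> {K. compact K \<and> K \<subseteq> U}. emeasure M K))"

definition has_weak_integral ::
    "'a measure \<Rightarrow> 'a set \<Rightarrow> ('a \<Rightarrow> 'h::complex_inner) \<Rightarrow> 'h \<Rightarrow> bool" where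
  "has_weak_integral M A f v \<longleftrightarrow>
     (\<forall>x. set_integrable M A (\<lambda>y. cinner (f y) x) \<and>
          cinner v x = (LINT y:A|M. cinner (f y) x))"

definition weak_integrable :: "'a measure \<Rightarrow> 'a set \<Rightarrow> ('a \<Rightarrow> 'h::complex_inner) \<Rightarrow> bool" where
  "weak_integrable M A f \<longleftrightarrow> (\<exists>v. has_weak_integral M A f v)"

definition weak_integral :: "'a measure \<Rightarrow> 'a set \<Rightarrow> ('a \<Rightarrow> 'h::complex_inner) \<Rightarrow> 'h" where
  "weak_integral M A f = (THE v. has_weak_integral M A f v)"

end

theory Submission
  imports Defs
begin

text \<open>
  By the Riesz representation theorem a bounded weakly measurable function has a weak integral
  over every set of finite measure; this yields the inner integrals
  \<open>w g = \<integral>\<^sub>\<Lambda>\<^sub>1 f (g + h) dh\<close> and their integral \<open>v = \<integral>\<^sub>\<Lambda>\<^sub>2 w\<close>.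
  Testing \<open>v\<close> against itself and applying Cauchy--Schwarz twice, first pointwise and then in
  \<open>L\<^sup>2(\<Lambda>\<^sub>2)\<close>, gives \<open>\<parallel>v\<parallel>\<^sup>2 \<le> (\<integral>\<^sub>\<Lambda>\<^sub>2 \<parallel>w\<parallel>)\<^sup>2 \<le> \<mu>(\<Lambda>\<^sub>2) \<integral>\<^sub>\<Lambda>\<^sub>2 \<parallel>w\<parallel>\<^sup>2\<close>.
  Finally \<open>\<parallel>w g\<parallel>\<^sup>2 = \<integral>\<^sub>\<Lambda>\<^sub>1 \<integral>\<^sub>\<Lambda>\<^sub>1 \<langle>f (g + h\<^sub>1), f (g + h\<^sub>2)\<rangle>\<close>, and Fubini's theorem for this
  bounded integrand brings the triple integral into the stated order.
\<close>

section \<open>Complex inner product spaces\<close>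

lemma cinner_zero_left [simp]: "cinner 0 y = 0"
  using cinner_add_left[of 0 0 y] by simp

lemma cinner_zero_right [simp]: "cinner x 0 = 0"
  using cinner_commute[of x 0] by simp

lemma cinner_add_right: "cinner x (y + z) = cinner x y + cinner x z"
  using cinner_add_left[of y z x] by (metis cinner_commute complex_cnj_add)

lemma cinner_scaleC_right: "cinner x (r *\<^sub>C y) = r * cinner x y"
  using cinner_scaleC_left[of r y x] by (metis cinner_commute complex_cnj_cnj complex_cnj_mult)

lemma cinner_diff_left: "cinner (x - y) z = cinner x z - cinner y z"
  using cinner_add_left[of "x - y" y z] by simp

lemma cinner_diff_right: "cinner x (y - z) = cinner x y - cinner x z"
  using cinner_add_right[of x "y - z" z] by simp

lemma cinner_scaleR_left: "cinner (r *\<^sub>R x) y = complex_of_real r * cinner x y"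
  by (simp add: scaleR_scaleC cinner_scaleC_left)

lemma cinner_scaleR_right: "cinner x (r *\<^sub>R y) = complex_of_real r * cinner x y"
  by (simp add: scaleR_scaleC cinner_scaleC_right)

lemma cinner_self: "cinner x x = complex_of_real ((norm x)\<^sup>2)"
proof -
  have "Im (cinner x x) = 0" "0 \<le> Re (cinner x x)"
    using cinner_ge_zero[of x] by (auto simp: less_eq_complex_def)
  then show ?thesis by (simp add: norm_eq_sqrt_cinner complex_eq_iff)
qed

lemma norm_diff_scaleR_power2:
  "(norm (u - s *\<^sub>R w))\<^sup>2 = (norm u)\<^sup>2 - 2 * s * Re (cinner u w) + s\<^sup>2 * (norm w)\<^sup>2"
proof -
  have "Re (cinner w u) = Re (cinner u w)"
    using cinner_commute[of w u] by simp
  then have "Re (cinner (u - s *\<^sub>R w) (u - s *\<^sub>R w))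
      = Re (cinner u u) - 2 * s * Re (cinner u w) + s\<^sup>2 * Re (cinner w w)"
    by (simp add: cinner_diff_left cinner_diff_right cinner_scaleR_left cinner_scaleR_right
        power2_eq_square algebra_simps)
  then show ?thesis
    by (simp add: cinner_self)
qed

lemma parallelogram_law:
  fixes a b :: "'a::complex_inner"
  shows "(norm (a + b))\<^sup>2 + (norm (a - b))\<^sup>2 = 2 * (norm a)\<^sup>2 + 2 * (norm b)\<^sup>2"
  using norm_diff_scaleR_power2[of a "-1" b] norm_diff_scaleR_power2[of a 1 b] by simp

lemma norm_cinner_le: "norm (cinner x y) \<le> norm x * norm y"
proof (cases "y = 0")
  case False
  define t where "t = cinner y x / complex_of_real ((norm y)\<^sup>2)"
  define z where "z = x - t *\<^sub>C y"
  have "cinner y z = 0"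
    using False by (simp add: z_def t_def cinner_diff_right cinner_scaleC_right cinner_self)
  then have "cinner z y = 0"
    using cinner_commute[of z y] by simp
  have "cinner x x = cinner z z + (t * cnj t) * cinner y y"
    using \<open>cinner y z = 0\<close> \<open>cinner z y = 0\<close>
    by (simp add: z_def cinner_diff_left cinner_diff_right cinner_scaleC_left cinner_scaleC_right
        algebra_simps)
  then have "complex_of_real ((norm x)\<^sup>2)
      = complex_of_real ((norm z)\<^sup>2 + (cmod t)\<^sup>2 * (norm y)\<^sup>2)"
    by (simp only: cinner_self complex_norm_square[symmetric] of_real_add of_real_mult)
  then have "(norm x)\<^sup>2 = (norm z)\<^sup>2 + (cmod t)\<^sup>2 * (norm y)\<^sup>2"
    by (simp only: of_real_eq_iff)
  then have "(cmod t)\<^sup>2 * (norm y)\<^sup>2 \<le> (norm x)\<^sup>2"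
    by simp
  then have "(cmod t)\<^sup>2 * (norm y)\<^sup>2 * (norm y)\<^sup>2 \<le> (norm x)\<^sup>2 * (norm y)\<^sup>2"
    by (rule mult_right_mono) simp
  moreover have "(norm (cinner y x))\<^sup>2 = (cmod t)\<^sup>2 * (norm y)\<^sup>2 * (norm y)\<^sup>2"
    using False by (simp add: t_def norm_divide norm_power power_divide)
      (simp add: power2_eq_square power4_eq_xxxx)
  ultimately have "(norm (cinner y x))\<^sup>2 \<le> (norm x * norm y)\<^sup>2"
    by (simp only: power_mult_distrib)
  then have "norm (cinner y x) \<le> norm x * norm y"
    by (rule power2_le_imp_le) simp
  then show ?thesis
    using cinner_commute[of x y] by simp
qed simp

section \<open>The Riesz representation theorem\<close>

lemma norm_diff_power2_le_convex:
  fixes S :: "'a::complex_inner set"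
  assumes "convex S" "k \<in> S" "k' \<in> S"
  shows "(norm (k - k'))\<^sup>2 \<le> 2 * (norm (z - k))\<^sup>2 + 2 * (norm (z - k'))\<^sup>2 - 4 * (infdist z S)\<^sup>2"
proof -
  define m where "m = (1/2) *\<^sub>R k + (1/2) *\<^sub>R k'"
  have "m \<in> S"
    unfolding m_def by (rule convexD[OF assms]) auto
  have "(z - k) + (z - k') = 2 *\<^sub>R (z - m)"
    by (simp add: m_def algebra_simps) (simp add: scaleR_2)
  then have "norm ((z - k) + (z - k')) = 2 * dist z m"
    by (simp add: dist_norm)
  moreover have "infdist z S \<le> dist z m"
    using \<open>m \<in> S\<close> by (rule infdist_le)
  ultimately have "(2 * infdist z S)\<^sup>2 \<le> (norm ((z - k) + (z - k')))\<^sup>2"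
    by (intro power_mono) (simp_all add: infdist_nonneg)
  moreover have "(norm ((z - k) - (z - k')))\<^sup>2 = (norm (k - k'))\<^sup>2"
  proof -
    have "(z - k) - (z - k') = - (k - k')"
      by simp
    then show ?thesis
      by (simp only: norm_minus_cancel)
  qed
  moreover have "(2 * infdist z S)\<^sup>2 = 4 * (infdist z S)\<^sup>2"
    by (simp add: power_mult_distrib)
  ultimately show ?thesis
    using parallelogram_law[of "z - k" "z - k'"] by linarith
qed

lemma closed_convex_nearest_point:
  fixes S :: "'a::{complex_inner, complete_space} set"
  assumes "closed S" "convex S" "S \<noteq> {}"
  obtains k where "k \<in> S" "dist z k = infdist z S"
proof -
  define d where "d = infdist z S"
  have "\<exists>k\<in>S. dist z k < d + 1 / Suc n" for n
  proof -
    have "Inf (dist z ` S) < d + 1 / Suc n"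
      using infdist_notempty[OF assms(3)] by (simp add: d_def)
    then show ?thesis
      using assms(3) by (subst (asm) cInf_less_iff) (auto intro: bdd_belowI[of _ 0])
  qed
  then obtain ks where ks: "\<And>n. ks n \<in> S" "\<And>n. dist z (ks n) < d + 1 / Suc n"
    by metis
  have "(\<lambda>n. dist z (ks n)) \<longlonglongrightarrow> d"
  proof (rule real_tendsto_sandwich)
    show "\<forall>\<^sub>F n in sequentially. d \<le> dist z (ks n)"
      using ks(1) by (simp add: d_def infdist_le)
    show "\<forall>\<^sub>F n in sequentially. dist z (ks n) \<le> d + 1 / Suc n"
      using ks(2) by (simp add: less_imp_le)
    show "(\<lambda>n. d + 1 / Suc n) \<longlonglongrightarrow> d"
      using tendsto_add[OF tendsto_const LIMSEQ_inverse_real_of_nat] by (simp add: inverse_eq_divide)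
  qed simp
  then have "(\<lambda>n. (dist z (ks n))\<^sup>2 - d\<^sup>2) \<longlonglongrightarrow> 0"
    by (intro LIM_zero tendsto_power)
  then have sq: "(\<lambda>n. (norm (z - ks n))\<^sup>2 - d\<^sup>2) \<longlonglongrightarrow> 0"
    by (simp add: dist_norm)
  have "Cauchy ks"
  proof (rule metric_CauchyI)
    fix \<epsilon> :: real
    assume "\<epsilon> > 0"
    then obtain N where N: "\<And>n. n \<ge> N \<Longrightarrow> \<bar>(norm (z - ks n))\<^sup>2 - d\<^sup>2\<bar> < \<epsilon>\<^sup>2 / 4"
      using LIMSEQ_D[OF sq, of "\<epsilon>\<^sup>2 / 4"] by auto
    have "dist (ks m) (ks n) < \<epsilon>" if "m \<ge> N" "n \<ge> N" for m n
    proof -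
      have "(norm (z - ks m))\<^sup>2 - d\<^sup>2 < \<epsilon>\<^sup>2 / 4" "(norm (z - ks n))\<^sup>2 - d\<^sup>2 < \<epsilon>\<^sup>2 / 4"
        using N[OF that(1)] N[OF that(2)] abs_less_iff by blast+
      then have "(norm (ks m - ks n))\<^sup>2 < \<epsilon>\<^sup>2"
        using norm_diff_power2_le_convex[OF assms(2) ks(1) ks(1), of m n z] by (simp add: d_def)
      with \<open>\<epsilon> > 0\<close> have "norm (ks m - ks n) < \<epsilon>"
        by (simp add: power_less_imp_less_base[of _ 2])
      then show ?thesis
        by (simp add: dist_norm)
    qed
    then show "\<exists>N. \<forall>m\<ge>N. \<forall>n\<ge>N. dist (ks m) (ks n) < \<epsilon>"
      by blast
  qed
  then obtain k where k: "ks \<longlonglongrightarrow> k"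
    using Cauchy_convergent[OF \<open>Cauchy ks\<close>] unfolding convergent_def by blast
  show thesis
  proof (rule that)
    show "k \<in> S"
      using closed_sequentially[OF assms(1) _ k] ks(1) by blast
    show "dist z k = infdist z S"
      using LIMSEQ_unique[OF tendsto_dist[OF tendsto_const k] \<open>_ \<longlonglongrightarrow> d\<close>] by (simp add: d_def)
  qed
qed

lemma nearest_point_orthogonal:
  assumes nearest: "\<And>k. k \<in> K \<Longrightarrow> norm u \<le> norm (u - k)"
    and scale: "\<And>c k. k \<in> K \<Longrightarrow> c *\<^sub>C k \<in> K"
    and "k \<in> K"
  shows "cinner u k = 0"
proof -
  define a where "a = cinner u k"
  define w where "w = cnj a *\<^sub>C k"
  have "cinner u w = complex_of_real ((cmod a)\<^sup>2)"
    by (subst complex_norm_square) (simp add: w_def a_def cinner_scaleC_right mult.commute)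
  moreover have "(norm u)\<^sup>2 \<le> (norm (u - s *\<^sub>R w))\<^sup>2" for s
    using nearest[of "s *\<^sub>R w"] scale[OF scale[OF \<open>k \<in> K\<close>]]
    by (simp add: scaleR_scaleC w_def power_mono)
  ultimately have *: "s * (2 * (cmod a)\<^sup>2) \<le> s * (s * (norm w)\<^sup>2)" for s
    unfolding norm_diff_scaleR_power2 by (simp add: power2_eq_square algebra_simps)
  \<comment> \<open>for small \<open>s > 0\<close> the point \<open>s w\<close> of \<open>K\<close> would be closer to \<open>u\<close> than \<open>0\<close> unless \<open>a = 0\<close>\<close>
  have "2 * (cmod a)\<^sup>2 \<le> 0 + e" if "e > 0" for e
  proof -
    define s where "s = e / ((norm w)\<^sup>2 + 1)"
    have "s > 0"
      using that by (simp add: s_def add_nonneg_pos)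
    then have "2 * (cmod a)\<^sup>2 \<le> s * (norm w)\<^sup>2"
      using *[of s] by simp
    also have "\<dots> \<le> e"
      using that by (simp add: s_def divide_le_eq add_pos_nonneg mult_left_mono not_less)
    finally show ?thesis
      by simp
  qed
  then have "2 * (cmod a)\<^sup>2 \<le> 0"
    by (rule field_le_epsilon)
  then have "cmod a = 0"
    by simp
  then show ?thesis
    by (simp add: a_def)
qed

lemma riesz_representation:
  fixes \<phi> :: "'h::{complex_inner, complete_space} \<Rightarrow> complex"
  assumes add: "\<And>x y. \<phi> (x + y) = \<phi> x + \<phi> y"
    and scale: "\<And>c x. \<phi> (c *\<^sub>C x) = c * \<phi> x"
    and bounded: "\<And>x. norm (\<phi> x) \<le> C * norm x"
  obtains v where "\<And>x. \<phi> x = cinner v x"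
proof (cases "\<forall>x. \<phi> x = 0")
  case True
  then show thesis
    by (intro that[of 0]) simp
next
  case False
  have "bounded_linear \<phi>"
    using add bounded by (intro bounded_linear_intro[of _ C])
      (auto simp: scaleR_scaleC scale scaleR_conv_of_real mult.commute)
  then have lin: "linear \<phi>" and cont: "continuous_on UNIV \<phi>"
    by (auto intro: bounded_linear.linear linear_continuous_on)
  define K where "K = {k. \<phi> k = 0}"
  have "closed K"
    unfolding K_def using cont by (intro closed_Collect_eq) auto
  moreover have "convex K"
    using lin by (simp add: K_def convex_def linear_add linear_scale)
  moreover have "0 \<in> K"
    using lin by (simp add: K_def linear_0)
  moreover obtain z where z: "\<phi> z = 1"
  proof -
    obtain z0 where "\<phi> z0 \<noteq> 0"
      using False by blast
    then show thesis
      by (intro that[of "(1 / \<phi> z0) *\<^sub>C z0"]) (simp add: scale)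
  qed
  ultimately obtain k0 where k0: "k0 \<in> K" "dist z k0 = infdist z K"
    using closed_convex_nearest_point[of K z] by blast
  \<comment> \<open>the component of \<open>z\<close> orthogonal to the kernel \<open>K\<close>\<close>
  define u where "u = z - k0"
  have "\<phi> u = 1"
    using k0(1) z lin by (simp add: u_def K_def linear_diff)
  have orthogonal: "cinner u k = 0" if "k \<in> K" for k
  proof (rule nearest_point_orthogonal[where K = K])
    show "norm u \<le> norm (u - k)" if "k \<in> K" for k
    proof -
      have "k0 + k \<in> K"
        using k0(1) that lin by (simp add: K_def linear_add)
      then show ?thesis
        using k0(2) infdist_le[of "k0 + k" K z] by (simp add: u_def dist_norm algebra_simps)
    qed
    show "c *\<^sub>C k \<in> K" if "k \<in> K" for c k
      using that by (simp add: K_def scale)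
  qed fact
  have "cinner u x = \<phi> x * cinner u u" for x
  proof -
    have "x - \<phi> x *\<^sub>C u \<in> K"
      using lin \<open>\<phi> u = 1\<close> by (simp add: K_def linear_diff scale)
    then have "cinner u (x - \<phi> x *\<^sub>C u) = 0"
      by (rule orthogonal)
    then show ?thesis
      by (simp add: cinner_diff_right cinner_scaleC_right)
  qed
  moreover have "u \<noteq> 0"
    using \<open>\<phi> u = 1\<close> linear_0[OF lin] by auto
  ultimately show thesis
    by (intro that[of "(1 / (norm u)\<^sup>2) *\<^sub>R u"]) (simp add: cinner_scaleR_left cinner_self)
qed

section \<open>Bounded integrands on sets of finite measure\<close>

lemma finite_measure_restricted_finite:
  assumes "A \<in> sets M" "emeasure M A < \<infinity>"
  shows "finite_measure (density M (indicator A))"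
  using assms by (intro finite_measureI) (simp add: emeasure_restricted)

lemma set_integral_eq_restricted:
  fixes u :: "'a \<Rightarrow> 'b::{banach, second_countable_topology}"
  assumes "A \<in> sets M" "u \<in> borel_measurable M"
  shows "(LINT x:A|M. u x) = integral\<^sup>L (density M (indicator A)) u"
  using integral_density[of u M "indicator A"] assms
  by (simp add: set_lebesgue_integral_def ennreal_indicator)

lemma set_integrable_iff_restricted:
  fixes u :: "'a \<Rightarrow> 'b::{banach, second_countable_topology}"
  assumes "A \<in> sets M" "u \<in> borel_measurable M"
  shows "set_integrable M A u \<longleftrightarrow> integrable (density M (indicator A)) u"
  using integrable_density[of u M "indicator A"] assms
  by (simp add: set_integrable_def ennreal_indicator)

lemma set_integrable_bounded:
  fixes u :: "'a \<Rightarrow> 'b::{banach, second_countable_topology}"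
  assumes "A \<in> sets M" "emeasure M A < \<infinity>" "u \<in> borel_measurable M" "\<And>x. norm (u x) \<le> B"
  shows "set_integrable M A u"
proof -
  interpret finite_measure "density M (indicator A)"
    using assms(1,2) by (rule finite_measure_restricted_finite)
  show ?thesis
    using assms by (simp add: set_integrable_iff_restricted integrable_const_bound[where B = B])
qed

lemma norm_set_integral_le:
  fixes u :: "'a \<Rightarrow> 'b::{banach, second_countable_topology}"
  assumes "A \<in> sets M" "emeasure M A < \<infinity>" "u \<in> borel_measurable M" "\<And>x. norm (u x) \<le> B"
  shows "norm (LINT x:A|M. u x) \<le> B * measure M A"
proof -
  have "0 \<le> B"
    using assms(4) norm_ge_zero order_trans by blast
  have "norm (LINT x:A|M. u x) \<le> (LINT x:A|M. norm (u x))"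
    using assms by (intro set_integral_norm_bound set_integrable_bounded)
  also have "\<dots> \<le> (LINT x:A|M. B)"
    using assms \<open>0 \<le> B\<close> by (intro set_integral_mono set_integrable_bounded[where B = B]) auto
  also have "\<dots> = B * measure M A"
    using assms by (simp add: set_integral_const)
  finally show ?thesis .
qed

lemma set_integral_power2_le:
  fixes q :: "'a \<Rightarrow> real"
  assumes A: "A \<in> sets M" "emeasure M A < \<infinity>"
    and q: "q \<in> borel_measurable M" "\<And>x. \<bar>q x\<bar> \<le> B"
  shows "(LINT x:A|M. q x)\<^sup>2 \<le> measure M A * (LINT x:A|M. (q x)\<^sup>2)"
proof (cases "measure M A = 0")
  case True
  then show ?thesis
    using norm_set_integral_le[OF A q(1), of B] q(2) by simp
next
  case False
  \<comment> \<open>the variance of \<open>q\<close> about its mean value \<open>c / m\<close> is nonnegative\<close>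
  define m where "m = measure M A"
  define c where "c = (LINT x:A|M. q x)"
  have "m > 0"
    using False measure_nonneg[of M A] unfolding m_def by linarith
  have "set_integrable M A q"
    using A q by (intro set_integrable_bounded[where B = B]) auto
  moreover have "(q x)\<^sup>2 \<le> B\<^sup>2" for x
    using q(2) by (metis abs_ge_zero abs_le_square_iff abs_of_nonneg order_trans)
  then have "set_integrable M A (\<lambda>x. (q x)\<^sup>2)"
    using A q by (intro set_integrable_bounded[where B = "B\<^sup>2"]) auto
  moreover have "set_integrable M A (\<lambda>x. (c / m)\<^sup>2)"
    using A by (intro set_integrable_bounded[where B = "(c / m)\<^sup>2"]) auto
  ultimately have "(LINT x:A|M. ((q x)\<^sup>2 - (2 * (c / m)) * q x) + (c / m)\<^sup>2)
      = (LINT x:A|M. (q x)\<^sup>2) - 2 * (c / m) * c + m * (c / m)\<^sup>2"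
    using A by (simp add: set_integral_const c_def m_def)
  also have "\<dots> = (LINT x:A|M. (q x)\<^sup>2) - c\<^sup>2 / m"
    using \<open>m > 0\<close> by (simp add: field_simps power2_eq_square)
  moreover have "(\<lambda>x. ((q x)\<^sup>2 - (2 * (c / m)) * q x) + (c / m)\<^sup>2) = (\<lambda>x. (q x - c / m)\<^sup>2)"
    by (simp add: fun_eq_iff power2_diff algebra_simps)
  moreover have "0 \<le> (LINT x:A|M. (q x - c / m)\<^sup>2)"
    unfolding set_lebesgue_integral_def by (intro Bochner_Integration.integral_nonneg) simp
  ultimately have "c\<^sup>2 / m \<le> (LINT x:A|M. (q x)\<^sup>2)"
    by simp
  then show ?thesis
    using \<open>m > 0\<close> by (simp add: c_def m_def pos_divide_le_eq mult.commute)
qed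

lemma borel_measurable_continuous_comp2:
  assumes "(\<lambda>(x, y). H x y) \<in> borel_measurable borel"
    and "continuous_on UNIV f" "continuous_on UNIV g"
  shows "(\<lambda>p. H (f p) (g p)) \<in> borel_measurable borel"
  using measurable_compose[OF borel_measurable_continuous_onI[OF continuous_on_Pair[OF assms(2,3)]]
      assms(1)]
  by simp

lemma borel_measurable_continuous_comp3:
  assumes "(\<lambda>(x, y, z). H x y z) \<in> borel_measurable borel"
    and "continuous_on UNIV f" "continuous_on UNIV g" "continuous_on UNIV h"
  shows "(\<lambda>p. H (f p) (g p) (h p)) \<in> borel_measurable borel"
  using measurable_compose[OF borel_measurable_continuous_onI
      [OF continuous_on_Pair[OF assms(2) continuous_on_Pair[OF assms(3,4)]]] assms(1)]
  by simp

lemma sets_pair_measure_borel: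
  assumes "sets M = sets (borel :: 'a::second_countable_topology measure)"
    and "sets N = sets (borel :: 'b::second_countable_topology measure)"
  shows "sets (M \<Otimes>\<^sub>M N) = sets (borel :: ('a \<times> 'b) measure)"
  using sets_pair_measure_cong[OF assms] borel_prod by metis

lemma borel_measurable_set_integral_param:
  fixes H :: "'b::second_countable_topology \<Rightarrow> 'a::second_countable_topology \<Rightarrow>
      'c::{banach, second_countable_topology}"
  assumes M: "sets M = sets borel" and A: "A \<in> sets M" "emeasure M A < \<infinity>"
    and H: "(\<lambda>(x, y). H x y) \<in> borel_measurable borel"
  shows "(\<lambda>x. LINT y:A|M. H x y) \<in> borel_measurable borel"
proof -
  let ?N = "density M (indicator A)"
  interpret finite_measure ?N
    using A by (rule finite_measure_restricted_finite)
  have "sets (borel \<Otimes>\<^sub>M ?N) = sets (borel :: ('b \<times> 'a) measure)"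
    using M by (intro sets_pair_measure_borel) auto
  then have "case_prod H \<in> borel_measurable (borel \<Otimes>\<^sub>M ?N)"
    using H measurable_cong_sets[OF _ refl] by blast
  then have "(\<lambda>x. integral\<^sup>L ?N (H x)) \<in> borel_measurable borel"
    by (rule borel_measurable_lebesgue_integral)
  moreover have "H x \<in> borel_measurable M" for x
    using borel_measurable_continuous_comp2[OF H, of "\<lambda>_. x" id] M by simp
  ultimately show ?thesis
    using A by (simp add: set_integral_eq_restricted)
qed

lemma set_integral_swap:
  fixes H :: "'a::second_countable_topology \<Rightarrow> 'a \<Rightarrow> 'c::{banach, second_countable_topology}"
  assumes M: "sets M = sets borel"
    and A: "A \<in> sets M" "emeasure M A < \<infinity>" and B: "B \<in> sets M" "emeasure M B < \<infinity>"
    and H: "(\<lambda>(x, y). H x y) \<in> borel_measurable borel" and bounded: "\<And>x y. norm (H x y) \<le> C"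
  shows "(LINT x:A|M. LINT y:B|M. H x y) = (LINT y:B|M. LINT x:A|M. H x y)"
proof -
  let ?A = "density M (indicator A)" and ?B = "density M (indicator B)"
  have fin: "finite_measure ?A" "finite_measure ?B"
    using A B by (simp_all add: finite_measure_restricted_finite)
  interpret A: finite_measure ?A
    by (fact fin)
  interpret B: finite_measure ?B
    by (fact fin)
  interpret pair_sigma_finite ?A ?B
    by unfold_locales
  interpret AB: finite_measure "?A \<Otimes>\<^sub>M ?B"
    using finite_measure_pair_measure[OF fin(2,1)] .
  have H': "(\<lambda>(y, x). H x y) \<in> borel_measurable borel"
    using borel_measurable_continuous_comp2[OF H, of snd fst]
    by (simp add: case_prod_beta' continuous_intros)
  have "sets (?A \<Otimes>\<^sub>M ?B) = sets (borel :: ('a \<times> 'a) measure)"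
    using M by (intro sets_pair_measure_borel) auto
  then have "case_prod H \<in> borel_measurable (?A \<Otimes>\<^sub>M ?B)"
    using H measurable_cong_sets[OF _ refl] by blast
  then have "integrable (?A \<Otimes>\<^sub>M ?B) (case_prod H)"
    using bounded by (intro AB.integrable_const_bound[where B = C]) auto
  then have "(\<integral>y. \<integral>x. H x y \<partial>?A \<partial>?B) = (\<integral>x. \<integral>y. H x y \<partial>?B \<partial>?A)"
    by (rule Fubini_integral)
  moreover have "H x \<in> borel_measurable M" "(\<lambda>x. H x y) \<in> borel_measurable M" for x y
    using borel_measurable_continuous_comp2[OF H, of "\<lambda>_. x" id]
      borel_measurable_continuous_comp2[OF H, of id "\<lambda>_. y"] M by simp_all
  moreover have "(\<lambda>x. LINT y:B|M. H x y) \<in> borel_measurable M"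
    "(\<lambda>y. LINT x:A|M. H x y) \<in> borel_measurable M"
    using borel_measurable_set_integral_param[OF M B H] borel_measurable_set_integral_param[OF M A H']
      M by simp_all
  ultimately show ?thesis
    using A B by (simp add: set_integral_eq_restricted)
qed

lemma set_integral_reverse3:
  fixes H :: "'a::second_countable_topology \<Rightarrow> 'a \<Rightarrow> 'a \<Rightarrow> 'c::{banach, second_countable_topology}"
  assumes M: "sets M = sets borel" and A: "A \<in> sets M" "emeasure M A < \<infinity>"
    and B: "B \<in> sets M" "emeasure M B < \<infinity>" and C: "C \<in> sets M" "emeasure M C < \<infinity>"
    and H: "(\<lambda>(x, y, z). H x y z) \<in> borel_measurable borel"
    and bounded: "\<And>x y z. norm (H x y z) \<le> D"
  shows "(LINT x:A|M. LINT y:B|M. LINT z:C|M. H x y z) = (LINT z:C|M. LINT y:B|M. LINT x:A|M. H x y z)"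
proof -
  have "(LINT x:A|M. LINT y:B|M. LINT z:C|M. H x y z) = (LINT y:B|M. LINT x:A|M. LINT z:C|M. H x y z)"
  proof (rule set_integral_swap[OF M A B, where C = "D * measure M C"])
    have "(\<lambda>(p, z). H (fst p) (snd p) z) \<in> borel_measurable borel"
      using borel_measurable_continuous_comp3[OF H, of "\<lambda>q. fst (fst q)" "\<lambda>q. snd (fst q)" snd]
      by (simp add: case_prod_beta' continuous_intros)
    from borel_measurable_set_integral_param[OF M C this]
    show "(\<lambda>(x, y). LINT z:C|M. H x y z) \<in> borel_measurable borel"
      by (simp add: case_prod_beta')
    show "norm (LINT z:C|M. H x y z) \<le> D * measure M C" for x y
      using borel_measurable_continuous_comp3[OF H, of "\<lambda>_. x" "\<lambda>_. y" id] M C bounded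
      by (intro norm_set_integral_le) simp_all
  qed
  also have "\<dots> = (LINT y:B|M. LINT z:C|M. LINT x:A|M. H x y z)"
  proof -
    have "(LINT x:A|M. LINT z:C|M. H x y z) = (LINT z:C|M. LINT x:A|M. H x y z)" for y
      using borel_measurable_continuous_comp3[OF H, of fst "\<lambda>_. y" snd] bounded
      by (intro set_integral_swap[OF M A C, where C = D]) (simp_all add: case_prod_beta' continuous_intros)
    then show ?thesis
      using B(1) by (intro set_lebesgue_integral_cong) blast+
  qed
  also have "\<dots> = (LINT z:C|M. LINT y:B|M. LINT x:A|M. H x y z)"
  proof (rule set_integral_swap[OF M B C, where C = "D * measure M A"])
    have "(\<lambda>(p, x). H x (fst p) (snd p)) \<in> borel_measurable borel"
      using borel_measurable_continuous_comp3[OF H, of snd "\<lambda>q. fst (fst q)" "\<lambda>q. snd (fst q)"]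
      by (simp add: case_prod_beta' continuous_intros)
    from borel_measurable_set_integral_param[OF M A this]
    show "(\<lambda>(y, z). LINT x:A|M. H x y z) \<in> borel_measurable borel"
      by (simp add: case_prod_beta')
    show "norm (LINT x:A|M. H x y z) \<le> D * measure M A" for y z
      using borel_measurable_continuous_comp3[OF H, of id "\<lambda>_. y" "\<lambda>_. z"] M A bounded
      by (intro norm_set_integral_le) simp_all
  qed
  finally show ?thesis .
qed

lemma set_integrable_iterated3:
  fixes H :: "'a::second_countable_topology \<Rightarrow> 'a \<Rightarrow> 'a \<Rightarrow> 'c::{banach, second_countable_topology}"
  assumes M: "sets M = sets borel" and A: "A \<in> sets M" "emeasure M A < \<infinity>"
    and B: "B \<in> sets M" "emeasure M B < \<infinity>" and C: "C \<in> sets M" "emeasure M C < \<infinity>"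
    and H: "(\<lambda>(x, y, z). H x y z) \<in> borel_measurable borel"
    and bounded: "\<And>x y z. norm (H x y z) \<le> D"
  shows "set_integrable M A (\<lambda>x. H x y z)"
    and "set_integrable M B (\<lambda>y. LINT x:A|M. H x y z)"
    and "set_integrable M C (\<lambda>z. LINT y:B|M. LINT x:A|M. H x y z)"
proof -
  have H_yx: "(\<lambda>(y, x). H x y z) \<in> borel_measurable borel" for z
    using borel_measurable_continuous_comp3[OF H, of snd fst "\<lambda>_. z"]
    by (simp add: case_prod_beta' continuous_intros)
  have H_zyx: "(\<lambda>(p, x). H x (snd p) (fst p)) \<in> borel_measurable borel"
    using borel_measurable_continuous_comp3[OF H, of snd "\<lambda>q. snd (fst q)" "\<lambda>q. fst (fst q)"]
    by (simp add: case_prod_beta' continuous_intros)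
  have inner_bounded: "norm (LINT x:A|M. H x y z) \<le> D * measure M A" for y z
    using borel_measurable_continuous_comp3[OF H, of id "\<lambda>_. y" "\<lambda>_. z"] M A bounded
    by (intro norm_set_integral_le) simp_all
  show "set_integrable M A (\<lambda>x. H x y z)"
    using borel_measurable_continuous_comp3[OF H, of id "\<lambda>_. y" "\<lambda>_. z"] M A bounded
    by (intro set_integrable_bounded) simp_all
  show "set_integrable M B (\<lambda>y. LINT x:A|M. H x y z)"
    using borel_measurable_set_integral_param[OF M A H_yx] M B inner_bounded
    by (intro set_integrable_bounded) (simp_all add: case_prod_beta')
  have "(\<lambda>(z, y). LINT x:A|M. H x y z) \<in> borel_measurable borel"
    using borel_measurable_set_integral_param[OF M A H_zyx] by (simp add: case_prod_beta')
  from borel_measurable_set_integral_param[OF M B this]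
  have "(\<lambda>z. LINT y:B|M. LINT x:A|M. H x y z) \<in> borel_measurable borel"
    by simp
  moreover have "norm (LINT y:B|M. LINT x:A|M. H x y z) \<le> D * measure M A * measure M B" for z
    using borel_measurable_set_integral_param[OF M A H_yx] M B inner_bounded
    by (intro norm_set_integral_le[where B = "D * measure M A"]) simp_all
  ultimately show "set_integrable M C (\<lambda>z. LINT y:B|M. LINT x:A|M. H x y z)"
    using M C by (intro set_integrable_bounded) simp_all
qed

section \<open>Weak integrals\<close>

lemma has_weak_integral_unique:
  assumes "has_weak_integral M A u v" "has_weak_integral M A u v'"
  shows "v = v'"
proof -
  have "cinner (v - v') x = 0" for x
    using assms by (simp add: has_weak_integral_def cinner_diff_left)
  then show ?thesis
    using cinner_eq_zero_iff[of "v - v'"] by simp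
qed

lemma has_weak_integral_weak_integral:
  fixes u :: "'a \<Rightarrow> 'h::{complex_inner, complete_space}"
  assumes A: "A \<in> sets M" "emeasure M A < \<infinity>"
    and measurable: "\<And>x. (\<lambda>y. cinner (u y) x) \<in> borel_measurable M"
    and bounded: "\<And>y. norm (u y) \<le> B"
  shows "has_weak_integral M A u (weak_integral M A u)"
proof -
  have bound: "norm (cinner (u y) x) \<le> B * norm x" for x y
    using norm_cinner_le[of "u y" x] bounded[of y] by (meson mult_right_mono norm_ge_zero order_trans)
  then have integrable: "set_integrable M A (\<lambda>y. cinner (u y) x)" for x
    by (rule set_integrable_bounded[OF A measurable])
  define \<phi> where "\<phi> x = (LINT y:A|M. cinner (u y) x)" for x
  have "\<phi> (x + x') = \<phi> x + \<phi> x'" for x x'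
    using integrable by (simp add: \<phi>_def cinner_add_right)
  moreover have "\<phi> (c *\<^sub>C x) = c * \<phi> x" for c x
    by (simp add: \<phi>_def cinner_scaleC_right)
  moreover have "norm (\<phi> x) \<le> (B * measure M A) * norm x" for x
    using norm_set_integral_le[OF A measurable bound] by (simp add: \<phi>_def algebra_simps)
  ultimately obtain v where "\<And>x. \<phi> x = cinner v x"
    using riesz_representation by metis
  then have v: "has_weak_integral M A u v"
    using integrable by (simp add: has_weak_integral_def \<phi>_def)
  have "weak_integral M A u = v"
    unfolding weak_integral_def
    by (rule the_equality[where P = "has_weak_integral M A u"]) (use v has_weak_integral_unique in auto)
  with v show ?thesis
    by simp
qed

lemma set_integral_cnj: "cnj (LINT x:A|M. f x) = (LINT x:A|M. cnj (f x))"
  unfolding set_lebesgue_integral_def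
  by (subst Bochner_Integration.integral_cnj[symmetric]) (simp add: scaleR_conv_of_real)

lemma cinner_weak_integral_self:
  assumes "has_weak_integral M A u v"
  shows "cinner v v = (LINT y:A|M. LINT y':A|M. cinner (u y) (u y'))"
proof -
  have "cinner (u y) v = (LINT y':A|M. cinner (u y) (u y'))" for y
    using assms cinner_commute[of "u y"] cinner_commute[of v]
    by (simp add: has_weak_integral_def set_integral_cnj)
  then show ?thesis
    using assms by (simp add: has_weak_integral_def)
qed

lemma norm_weak_integral_le:
  fixes u :: "'a \<Rightarrow> 'h::complex_inner"
  assumes v: "has_weak_integral M A u v" and A: "A \<in> sets M" "emeasure M A < \<infinity>"
    and q: "q \<in> borel_measurable M" "\<And>y. norm (u y) \<le> q y" "\<And>y. q y \<le> B"
    and measurable: "(\<lambda>y. cinner (u y) v) \<in> borel_measurable M"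
  shows "norm v \<le> (LINT y:A|M. q y)"
proof -
  have "0 \<le> q y" for y
    using q(2) norm_ge_zero order_trans by blast
  then have bound: "norm (cinner (u y) v) \<le> q y * norm v" for y
    using norm_cinner_le[of "u y" v] q(2)[of y] by (meson mult_right_mono norm_ge_zero order_trans)
  have "(norm v)\<^sup>2 = Re (LINT y:A|M. cinner (u y) v)"
    using v unfolding has_weak_integral_def by (metis Re_complex_of_real cinner_self)
  also have "\<dots> \<le> norm (LINT y:A|M. cinner (u y) v)"
    by (rule complex_Re_le_cmod)
  also have "\<dots> \<le> (LINT y:A|M. norm (cinner (u y) v))"
    using v by (intro set_integral_norm_bound) (simp add: has_weak_integral_def)
  also have "\<dots> \<le> (LINT y:A|M. q y * norm v)"
  proof (intro set_integral_mono)
    have "norm (cinner (u y) v) \<le> B * norm v" for y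
      using bound[of y] mult_right_mono[OF q(3)[of y] norm_ge_zero[of v]] by linarith
    then show "set_integrable M A (\<lambda>y. norm (cinner (u y) v))"
      using A measurable by (intro set_integrable_bounded[where B = "B * norm v"]) auto
    show "set_integrable M A (\<lambda>y. q y * norm v)"
      using A q \<open>\<And>y. 0 \<le> q y\<close>
      by (intro set_integrable_bounded[where B = "B * norm v"]) (auto intro: mult_right_mono)
  qed (use bound in auto)
  finally have "norm v * norm v \<le> norm v * (LINT y:A|M. q y)"
    by (simp add: power2_eq_square mult.commute)
  moreover have "0 \<le> (LINT y:A|M. q y)"
    unfolding set_lebesgue_integral_def
    using \<open>\<And>y. 0 \<le> q y\<close> by (intro Bochner_Integration.integral_nonneg) simp
  ultimately show ?thesis
    by (cases "norm v = 0") auto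
qed

lemma norm_weak_integral_power2_le:
  fixes u :: "'a \<Rightarrow> 'h::complex_inner"
  assumes v: "has_weak_integral M A u v" and A: "A \<in> sets M" "emeasure M A < \<infinity>"
    and measurable: "\<And>x. (\<lambda>y. cinner (u y) x) \<in> borel_measurable M"
      "(\<lambda>y. norm (u y)) \<in> borel_measurable M"
    and bounded: "\<And>y. norm (u y) \<le> B"
  shows "(norm v)\<^sup>2 \<le> measure M A * (LINT y:A|M. (norm (u y))\<^sup>2)"
proof -
  have "norm v \<le> (LINT y:A|M. norm (u y))"
    using v A measurable bounded by (intro norm_weak_integral_le) auto
  then have "(norm v)\<^sup>2 \<le> (LINT y:A|M. norm (u y))\<^sup>2"
    by (intro power_mono) auto
  also have "\<dots> \<le> measure M A * (LINT y:A|M. (norm (u y))\<^sup>2)"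
    using A measurable(2) bounded by (intro set_integral_power2_le) auto
  finally show ?thesis .
qed

lemma weak_integral_param:
  fixes u :: "'b::second_countable_topology \<Rightarrow> 'a::second_countable_topology \<Rightarrow>
      'h::{complex_inner, complete_space}"
  assumes M: "sets M = sets borel" and A: "A \<in> sets M" "emeasure M A < \<infinity>"
    and measurable: "\<And>z. (\<lambda>(x, y). cinner (u x y) z) \<in> borel_measurable borel"
    and bounded: "\<And>x y. norm (u x y) \<le> C"
  shows "has_weak_integral M A (u x) (weak_integral M A (u x))"
    and "(\<lambda>x. cinner (weak_integral M A (u x)) z) \<in> borel_measurable borel"
    and "norm (weak_integral M A (u x)) \<le> C * measure M A"
proof -
  have measurable_section: "(\<lambda>y. cinner (u x y) z) \<in> borel_measurable M" for x z
    using borel_measurable_continuous_comp2[OF measurable, of "\<lambda>_. x" id] M by simp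
  have weak_integral_exists: "has_weak_integral M A (u x) (weak_integral M A (u x))" for x
    using A measurable_section bounded by (rule has_weak_integral_weak_integral)
  then show "has_weak_integral M A (u x) (weak_integral M A (u x))" .
  have "cinner (weak_integral M A (u x)) z = (LINT y:A|M. cinner (u x y) z)" for x
    using weak_integral_exists by (simp add: has_weak_integral_def)
  then show "(\<lambda>x. cinner (weak_integral M A (u x)) z) \<in> borel_measurable borel"
    using borel_measurable_set_integral_param[OF M A measurable] by simp
  show "norm (weak_integral M A (u x)) \<le> C * measure M A"
    using norm_weak_integral_le[OF weak_integral_exists A, where q = "\<lambda>_. C" and B = C]
      A measurable_section bounded
    by (simp add: set_integral_const mult.commute)
qed

lemma norm_iterated_weak_integral_power2_le:
  fixes u :: "'a::second_countable_topology \<Rightarrow> 'a \<Rightarrow> 'h::{complex_inner, complete_space}"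
  assumes M: "sets M = sets borel"
    and A: "A \<in> sets M" "emeasure M A < \<infinity>" and B: "B \<in> sets M" "emeasure M B < \<infinity>"
    and measurable: "\<And>z. (\<lambda>(x, y). cinner (u x y) z) \<in> borel_measurable borel"
      "(\<lambda>(x, y, y'). cinner (u x y) (u x y')) \<in> borel_measurable borel"
    and bounded: "\<And>x y. norm (u x y) \<le> C"
  shows "has_weak_integral M A (\<lambda>x. weak_integral M B (u x))
      (weak_integral M A (\<lambda>x. weak_integral M B (u x)))"
    and "complex_of_real ((norm (weak_integral M A (\<lambda>x. weak_integral M B (u x))))\<^sup>2)
      \<le> complex_of_real (measure M A) * (LINT x:A|M. LINT y:B|M. LINT y':B|M. cinner (u x y) (u x y'))"
proof -
  let ?w = "\<lambda>x. weak_integral M B (u x)"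
  let ?v = "weak_integral M A ?w"
  note inner = weak_integral_param[OF M B measurable(1) bounded]
  have norm_w: "complex_of_real ((norm (?w x))\<^sup>2) = (LINT y:B|M. LINT y':B|M. cinner (u x y) (u x y'))"
    for x
    using cinner_weak_integral_self[OF inner(1)] by (simp add: cinner_self)
  have "(\<lambda>(p, y'). cinner (u (fst p) (snd p)) (u (fst p) y')) \<in> borel_measurable borel"
    using borel_measurable_continuous_comp3[OF measurable(2),
        of "\<lambda>q. fst (fst q)" "\<lambda>q. snd (fst q)" snd]
    by (simp add: case_prod_beta' continuous_intros)
  from borel_measurable_set_integral_param[OF M B this]
  have "(\<lambda>(x, y). LINT y':B|M. cinner (u x y) (u x y')) \<in> borel_measurable borel"
    by (simp add: case_prod_beta')
  from borel_measurable_set_integral_param[OF M B this]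
  have "(\<lambda>x. Re (complex_of_real ((norm (?w x))\<^sup>2))) \<in> borel_measurable borel"
    unfolding norm_w by measurable
  then have "(\<lambda>x. (norm (?w x))\<^sup>2) \<in> borel_measurable borel"
    by simp
  then have "(\<lambda>x. sqrt ((norm (?w x))\<^sup>2)) \<in> borel_measurable borel"
    by (rule measurable_compose[OF _ borel_measurable_sqrt])
  then have norm_measurable: "(\<lambda>x. norm (?w x)) \<in> borel_measurable M"
    using M by simp
  show v: "has_weak_integral M A ?w ?v"
    using A inner(2,3) M by (intro has_weak_integral_weak_integral) simp_all
  have "(norm ?v)\<^sup>2 \<le> measure M A * (LINT x:A|M. (norm (?w x))\<^sup>2)"
    using A inner(2,3) M norm_measurable by (intro norm_weak_integral_power2_le[OF v]) simp_all
  moreover have "(LINT x:A|M. LINT y:B|M. LINT y':B|M. cinner (u x y) (u x y'))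
      = complex_of_real (LINT x:A|M. (norm (?w x))\<^sup>2)"
    by (simp only: norm_w[symmetric] set_integral_complex_of_real)
  ultimately show "complex_of_real ((norm ?v)\<^sup>2)
      \<le> complex_of_real (measure M A) * (LINT x:A|M. LINT y:B|M. LINT y':B|M. cinner (u x y) (u x y'))"
    by (simp add: less_eq_complex_def)
qed

theorem proposition2p4:
  fixes \<mu> :: "'g::{topological_ab_group_add, t2_space, second_countable_topology} measure"
    and f :: "'g \<Rightarrow> 'h::{complex_inner, complete_space}"
    and \<Lambda>1 \<Lambda>2 :: "'g set"
  assumes "locally_compact_type TYPE('g)"
    and "haar_measure \<mu>"
    and "bounded (range f)"
    and "\<And>x. (\<lambda>g. cinner (f g) x) \<in> borel_measurable borel"
    and "(\<lambda>(g, h). cinner (f g) (f h)) \<in> borel_measurable borel"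
    and "\<Lambda>1 \<in> sets borel" and "\<Lambda>2 \<in> sets borel"
    and "emeasure \<mu> \<Lambda>1 < \<infinity>" and "emeasure \<mu> \<Lambda>2 < \<infinity>"
  shows "(\<forall>g. weak_integrable \<mu> \<Lambda>1 (\<lambda>h. f (g + h)))
    \<and> weak_integrable \<mu> \<Lambda>2 (\<lambda>g. weak_integral \<mu> \<Lambda>1 (\<lambda>h. f (g + h)))
    \<and> (\<forall>h1 h2. set_integrable \<mu> \<Lambda>2 (\<lambda>g. cinner (f (g + h1)) (f (g + h2))))
    \<and> (\<forall>h2. set_integrable \<mu> \<Lambda>1
           (\<lambda>h1. LINT g:\<Lambda>2|\<mu>. cinner (f (g + h1)) (f (g + h2))))
    \<and> set_integrable \<mu> \<Lambda>1
           (\<lambda>h2. LINT h1:\<Lambda>1|\<mu>. LINT g:\<Lambda>2|\<mu>. cinner (f (g + h1)) (f (g + h2)))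
    \<and> complex_of_real
        ((norm (weak_integral \<mu> \<Lambda>2 (\<lambda>g. weak_integral \<mu> \<Lambda>1 (\<lambda>h. f (g + h))))) ^ 2)
      \<le> complex_of_real (measure \<mu> \<Lambda>2) *
        (LINT h2:\<Lambda>1|\<mu>. LINT h1:\<Lambda>1|\<mu>. LINT g:\<Lambda>2|\<mu>. cinner (f (g + h1)) (f (g + h2)))"
proof -
  have M: "sets \<mu> = sets borel"
    using assms(2) by (simp add: haar_measure_def)
  have \<Lambda>1: "\<Lambda>1 \<in> sets \<mu>" "emeasure \<mu> \<Lambda>1 < \<infinity>" and \<Lambda>2: "\<Lambda>2 \<in> sets \<mu>" "emeasure \<mu> \<Lambda>2 < \<infinity>"
    using assms(6-9) M by auto
  obtain C where C: "\<And>g. norm (f g) \<le> C"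
    using assms(3) by (auto simp: bounded_iff)
  have translates: "(\<lambda>(g, h). cinner (f (g + h)) x) \<in> borel_measurable borel" for x
    using measurable_compose[OF borel_measurable_continuous_onI assms(4), of "\<lambda>p. fst p + snd p"]
    by (simp add: case_prod_beta' continuous_intros)
  have products: "(\<lambda>(g, h1, h2). cinner (f (g + h1)) (f (g + h2))) \<in> borel_measurable borel"
    using borel_measurable_continuous_comp2[OF assms(5),
        of "\<lambda>p. fst p + fst (snd p)" "\<lambda>p. fst p + snd (snd p)"]
    by (simp add: case_prod_beta' continuous_intros)
  have products_bounded: "norm (cinner (f (g + h1)) (f (g + h2))) \<le> C * C" for g h1 h2
    using norm_cinner_le[of "f (g + h1)" "f (g + h2)"] C by (meson mult_mono norm_ge_zero order_trans)
  note inner = weak_integral_param(1)[OF M \<Lambda>1 translates C]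
  note outer = norm_iterated_weak_integral_power2_le[OF M \<Lambda>2 \<Lambda>1 translates products C]
  note integrable = set_integrable_iterated3[OF M \<Lambda>2 \<Lambda>1 \<Lambda>1 products products_bounded]
  note reverse = set_integral_reverse3[OF M \<Lambda>2 \<Lambda>1 \<Lambda>1 products products_bounded]
  show ?thesis
    using inner outer integrable by (auto simp: weak_integrable_def reverse)
qed

end
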